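(* Let $\varepsilon>0$ and let $R_1,\dots,R_n:[d]\to\mathcal Y$ be $\varepsilon$-private randomizers with $\mathcal Y$ finite and $d$ even, and let $|\vec R|_{\neq}$ be the number of distinct randomizers among $R_1,\dots,R_n$. Suppose $d>4(e^{2\varepsilon}-1)^2\ln(12|\mathcal Y|\cdot|\vec R|_{\neq})$. If $H$ is chosen uniformly at random among subsets of $[d]$ of size $d/2$, then with probability at least $5/6$ over $H$: for every $y\in\mathcal Y$ and every $i\in[n]$, $y$ is not $\left((e^{2\varepsilon}-1)\sqrt{\frac4d\ln(12|\mathcal Y|\cdot|\vec R|_{\neq})}\right)$-leaky with respect to $H,R_i$.
   Context: A randomizer $R:[d]\to\mathcal Y$ is a randomized map into a message set $\mathcal Y$; it is $\varepsilon$-private if for all $x,x'\in[d]$ and all $Y\subseteq\mathcal Y$, $\Pr[R(x)\in Y]\le e^{\varepsilon}\Pr[R(x')\in Y]$. $\mathbf U$ is the uniform distribution on $[d]$; for $H\subseteq[d]$, $\mathbf U_H$ is the uniform distribution on $H$; $R(\mathbf U)$ (resp. $R(\mathbf U_H)$) is the distribution of $R(\hat x)$ where $\hat x\sim\mathbf U$ (resp. $\hat x\sim \mathbf U_H$). For $H\subset[d]$ with $|H|=d/2$, a message $y$ is $v$-leaky with respect to $H,R$ if $\left|\ln\frac{\Pr[R(\mathbf U_H)=y]}{\Pr[R(\mathbf U)=y]}\right|>v$ (messages with $\Pr[R(\mathbf U)=y]=0$ are regarded as not leaky). *)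

theory Defs
  imports "HOL-Probability.Probability"
begin

text \<open>The input domain [d] is rendered as {..<d}; a randomizer is a map
  R :: nat \<Rightarrow> 'y pmf, of which only the values on {..<d} matter.
  The finite message set is the finite type 'y.\<close>

definition eps_private :: "real \<Rightarrow> nat \<Rightarrow> (nat \<Rightarrow> 'y pmf) \<Rightarrow> bool" where
  "eps_private \<epsilon> d R \<longleftrightarrow>
     (\<forall>x\<in>{..<d}. \<forall>x'\<in>{..<d}. \<forall>Y.
        measure_pmf.prob (R x) Y \<le> exp \<epsilon> * measure_pmf.prob (R x') Y)"

definition out_prob :: "(nat \<Rightarrow> 'y pmf) \<Rightarrow> nat set \<Rightarrow> 'y \<Rightarrow> real" where
  "out_prob R H y = measure_pmf.prob (pmf_of_set H \<bind> R) {y}"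

text \<open>y is v-leaky w.r.t. H, R (inputs uniform on {..<d}). A message with
  Pr[R(U)=y] = 0 is not leaky; if Pr[R(U_H)=y] = 0 < Pr[R(U)=y] the log-ratio
  is infinite, hence leaky.\<close>
definition leaky :: "real \<Rightarrow> nat \<Rightarrow> nat set \<Rightarrow> (nat \<Rightarrow> 'y pmf) \<Rightarrow> 'y \<Rightarrow> bool" where
  "leaky v d H R y \<longleftrightarrow>
     out_prob R {..<d} y > 0 \<and>
     (out_prob R H y = 0 \<or> \<bar>ln (out_prob R H y / out_prob R {..<d} y)\<bar> > v)"

end

theory Submission
  imports Defs
begin

text \<open>Fix a randomizer \<open>R\<close> and a message \<open>y\<close>, and write \<open>p x = Pr[R(x) = y]\<close> and
  \<open>S = \<Sum>x<d. p x\<close>. By \<open>\<epsilon>\<close>-privacy all values \<open>p x\<close> lie within \<open>(exp (2 \<epsilon>) - 1) S / d\<close>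
  of each other, and \<open>y\<close> can only be \<open>v\<close>-leaky for \<open>H\<close> if \<open>\<Sum>x\<in>H. p x\<close> deviates from
  \<open>S / 2\<close> by at least \<open>v S / 4\<close>. A Hoeffding bound for sampling half of \<open>[d]\<close> without
  replacement bounds the probability of such a deviation by \<open>2 exp (- L)\<close>, where \<open>v\<close> is
  calibrated to \<open>L\<close>; with \<open>L = ln (12 |Y| |R|\<^sub>\<noteq>)\<close> a union bound over messages and distinct
  randomizers leaves failure probability \<open>1/6\<close>.

  The Hoeffding bound comes from a coupling: a uniform half-subset of \<open>{..<2m}\<close> is
  distributed as \<open>\<sigma> ` B\<close>, with \<open>\<sigma>\<close> a uniform permutation and \<open>B\<close> picking one element of
  each pair \<open>{2k, 2k+1}\<close> by independent fair coins. For fixed \<open>\<sigma>\<close> the sum over \<open>\<sigma> ` B\<close>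
  is a sum of \<open>m\<close> independent two-point variables, whose moment generating function
  factorises and is bounded pairwise by Hoeffding's lemma.\<close>

definition ksubsets :: "'a set \<Rightarrow> nat \<Rightarrow> 'a set set" where
  "ksubsets A k = {H. H \<subseteq> A \<and> card H = k}"

lemma finite_ksubsets: "finite A \<Longrightarrow> finite (ksubsets A k)"
  unfolding ksubsets_def by (rule finite_subset[of _ "Pow A"]) auto

lemma lessThan_in_ksubsets: "k \<le> n \<Longrightarrow> {..<k} \<in> ksubsets {..<n} k"
  by (auto simp: ksubsets_def)

lemma bij_betw_image_ksubsets:
  assumes "\<sigma> permutes A"
  shows "bij_betw ((`) \<sigma>) (ksubsets A k) (ksubsets A k)"
proof (rule bij_betw_byWitness[where f' = "(`) (inv \<sigma>)"])
  have inv: "inv \<sigma> permutes A"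
    using assms by (rule permutes_inv)
  show "\<forall>H\<in>ksubsets A k. inv \<sigma> ` \<sigma> ` H = H" "\<forall>H\<in>ksubsets A k. \<sigma> ` inv \<sigma> ` H = H"
    using assms by (simp_all add: image_image permutes_inverses)
  show "(`) \<sigma> ` ksubsets A k \<subseteq> ksubsets A k" "(`) (inv \<sigma>) ` ksubsets A k \<subseteq> ksubsets A k"
    using assms inv card_image[OF inj_on_subset[OF permutes_inj[OF assms] subset_UNIV]]
      card_image[OF inj_on_subset[OF permutes_inj[OF inv] subset_UNIV]]
    by (auto simp: ksubsets_def permutes_in_image)
qed

lemma ex_permutes_image_eq:
  assumes "finite A" "B \<in> ksubsets A k" "B' \<in> ksubsets A k"
  obtains \<tau> where "\<tau> permutes A" "\<tau> ` B = B'"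
proof -
  have sub: "B \<subseteq> A" "B' \<subseteq> A" and card: "card B = card B'"
    using assms(2,3) by (auto simp: ksubsets_def)
  have fin: "finite B" "finite B'"
    using sub assms(1) finite_subset by auto
  obtain f where f: "bij_betw f B B'"
    using finite_same_card_bij[OF fin card] by blast
  have "card (A - B) = card (A - B')"
    using sub fin card by (simp add: card_Diff_subset)
  then obtain g where g: "bij_betw g (A - B) (A - B')"
    using finite_same_card_bij[of "A - B" "A - B'"] assms(1) by auto
  define \<tau> where "\<tau> x = (if x \<in> B then f x else if x \<in> A then g x else x)" for x
  have \<tau>B: "bij_betw \<tau> B B'"
    using f by (rule bij_betw_cong[THEN iffD1, rotated]) (simp add: \<tau>_def)
  have "bij_betw \<tau> (A - B) (A - B')"
    using g by (rule bij_betw_cong[THEN iffD1, rotated]) (simp add: \<tau>_def)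
  then have "bij_betw \<tau> (B \<union> (A - B)) (B' \<union> (A - B'))"
    by (intro bij_betw_combine[OF \<tau>B]) auto
  with sub have "bij_betw \<tau> A A"
    by (simp add: Un_absorb1)
  then have "\<tau> permutes A"
    by (rule bij_imp_permutes) (use sub in \<open>auto simp: \<tau>_def\<close>)
  moreover have "\<tau> ` B = B'"
    using \<tau>B by (simp add: bij_betw_def)
  ultimately show thesis
    by (rule that)
qed

lemma sum_ksubsets_eq_sum_permutes:
  fixes F :: "'a set \<Rightarrow> real"
  assumes "finite A" "B \<in> ksubsets A k"
  shows "card {\<sigma>. \<sigma> permutes A} * (\<Sum>H\<in>ksubsets A k. F H) =
         card (ksubsets A k) * (\<Sum>\<sigma> | \<sigma> permutes A. F (\<sigma> ` B))"
proof -
  have orbit: "(\<Sum>\<sigma> | \<sigma> permutes A. F (\<sigma> ` H)) = (\<Sum>\<sigma> | \<sigma> permutes A. F (\<sigma> ` B))"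
    if H: "H \<in> ksubsets A k" for H
  proof -
    obtain \<tau> where \<tau>: "\<tau> permutes A" "\<tau> ` B = H"
      using ex_permutes_image_eq[OF assms H] .
    have "(\<Sum>\<sigma> | \<sigma> permutes A. F (\<sigma> ` B)) = (\<Sum>\<sigma> | \<sigma> permutes A. F ((\<sigma> \<circ> \<tau>) ` B))"
      by (rule sum_permutations_compose_right[OF \<tau>(1)])
    also have "\<dots> = (\<Sum>\<sigma> | \<sigma> permutes A. F (\<sigma> ` H))"
      by (simp only: image_comp[symmetric] \<tau>(2))
    finally show ?thesis ..
  qed
  have "card {\<sigma>. \<sigma> permutes A} * (\<Sum>H\<in>ksubsets A k. F H) =
        (\<Sum>\<sigma> | \<sigma> permutes A. \<Sum>H\<in>ksubsets A k. F (\<sigma> ` H))"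
    by (simp add: sum.reindex_bij_betw[OF bij_betw_image_ksubsets])
  also have "\<dots> = (\<Sum>H\<in>ksubsets A k. \<Sum>\<sigma> | \<sigma> permutes A. F (\<sigma> ` H))"
    by (rule sum.swap)
  also have "\<dots> = card (ksubsets A k) * (\<Sum>\<sigma> | \<sigma> permutes A. F (\<sigma> ` B))"
    by (simp add: orbit)
  finally show ?thesis .
qed

definition coin_subset :: "nat \<Rightarrow> (nat \<Rightarrow> bool) \<Rightarrow> nat set" where
  "coin_subset m b = (\<lambda>k. 2 * k + of_bool (b k)) ` {..<m}"

lemma inj_on_coin_choice: "inj_on (\<lambda>k. 2 * k + of_bool (b k) :: nat) K"
  by (rule inj_onI) (simp add: of_bool_def split: if_splits; presburger)

lemma coin_subset_in_ksubsets: "coin_subset m b \<in> ksubsets {..<2 * m} m"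
  unfolding ksubsets_def coin_subset_def
  by (auto simp: card_image[OF inj_on_coin_choice])

lemma sum_prod_coin_subset:
  fixes g :: "nat \<Rightarrow> 'a :: comm_semiring_1"
  shows "(\<Sum>b\<in>PiE {..<m} (\<lambda>_. UNIV). \<Prod>x\<in>coin_subset m b. g x) = (\<Prod>k<m. g (2 * k) + g (2 * k + 1))"
proof -
  have "(\<Prod>k<m. g (2 * k) + g (2 * k + 1)) = (\<Prod>k<m. \<Sum>c\<in>UNIV. g (2 * k + of_bool c))"
    by (simp add: UNIV_bool add.commute)
  also have "\<dots> = (\<Sum>b\<in>PiE {..<m} (\<lambda>_. UNIV). \<Prod>k<m. g (2 * k + of_bool (b k)))"
    by (rule prod_sum_PiE) auto
  finally show ?thesis
    by (simp add: coin_subset_def prod.reindex[OF inj_on_coin_choice])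
qed

lemma exp_add_exp_le:
  fixes a b :: real
  shows "exp a + exp b \<le> 2 * exp ((a + b) / 2 + (a - b)^2 / 8)"
proof -
  have ordered: "exp a + exp b \<le> 2 * exp ((a + b) / 2 + (a - b)^2 / 8)" if "b \<le> a" for a b :: real
  proof -
    have "- (a - b) * (1/2) + ln (1 + 1/2 * (exp (a - b) - 1)) \<le> (a - b)^2 / 8"
      using Hoeffdings_lemma_aux[of "a - b" "1/2"] that by simp
    then have "ln ((1 + exp (a - b)) / 2) \<le> (a - b) / 2 + (a - b)^2 / 8"
      by (simp add: field_simps)
    then have "(1 + exp (a - b)) / 2 \<le> exp ((a - b) / 2 + (a - b)^2 / 8)"
      using ln_le_cancel_iff[of "(1 + exp (a - b)) / 2" "exp ((a - b) / 2 + (a - b)^2 / 8)"]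
      by (simp add: add_pos_pos)
    then have "exp b * ((1 + exp (a - b)) / 2) \<le> exp b * exp ((a - b) / 2 + (a - b)^2 / 8)"
      by simp
    also have "exp b * ((1 + exp (a - b)) / 2) = (exp a + exp b) / 2"
      by (simp add: field_simps exp_diff)
    also have "exp b * exp ((a - b) / 2 + (a - b)^2 / 8) = exp ((a + b) / 2 + (a - b)^2 / 8)"
      by (simp add: exp_add[symmetric] field_simps)
    finally show ?thesis
      by simp
  qed
  show ?thesis
    using ordered[of a b] ordered[of b a] by (cases "b \<le> a") (simp_all add: add.commute power2_commute)
qed

lemma prod_pairs_exp_le:
  fixes f :: "nat \<Rightarrow> real"
  assumes width: "\<And>x x'. x < 2 * m \<Longrightarrow> x' < 2 * m \<Longrightarrow> \<bar>f x - f x'\<bar> \<le> w"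
  shows "(\<Prod>k<m. exp (l * f (2 * k)) + exp (l * f (2 * k + 1)))
           \<le> 2 ^ m * exp (l * (\<Sum>x<2 * m. f x) / 2 + m * l^2 * w^2 / 8)"
proof -
  have "(\<Prod>k<m. exp (l * f (2 * k)) + exp (l * f (2 * k + 1)))
          \<le> (\<Prod>k<m. 2 * exp (l * (f (2 * k) + f (2 * k + 1)) / 2 + l^2 * w^2 / 8))"
  proof (rule prod_mono, rule conjI)
    fix k assume "k \<in> {..<m}"
    then have "\<bar>f (2 * k) - f (2 * k + 1)\<bar> \<le> w"
      by (intro width) auto
    then have "(f (2 * k) - f (2 * k + 1))^2 \<le> w^2"
      by (metis abs_ge_zero order_trans power2_le_iff_abs_le)
    then have sq: "(l * f (2 * k) - l * f (2 * k + 1))^2 \<le> l^2 * w^2"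
      by (metis mult_left_mono power_mult_distrib right_diff_distrib zero_le_power2)
    have "exp (l * f (2 * k)) + exp (l * f (2 * k + 1))
            \<le> 2 * exp ((l * f (2 * k) + l * f (2 * k + 1)) / 2 + (l * f (2 * k) - l * f (2 * k + 1))^2 / 8)"
      by (rule exp_add_exp_le)
    also have "\<dots> \<le> 2 * exp (l * (f (2 * k) + f (2 * k + 1)) / 2 + l^2 * w^2 / 8)"
      using sq by (simp add: distrib_left)
    finally show "exp (l * f (2 * k)) + exp (l * f (2 * k + 1))
                 \<le> 2 * exp (l * (f (2 * k) + f (2 * k + 1)) / 2 + l^2 * w^2 / 8)" .
  qed (simp add: add_nonneg_nonneg)
  also have "\<dots> = 2 ^ m * exp (\<Sum>k<m. l * (f (2 * k) + f (2 * k + 1)) / 2 + l^2 * w^2 / 8)"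
    by (simp add: prod.distrib exp_sum)
  also have "(\<Sum>k<m. l * (f (2 * k) + f (2 * k + 1)) / 2 + l^2 * w^2 / 8)
               = l * (\<Sum>k<m. f (2 * k) + f (2 * k + 1)) / 2 + m * l^2 * w^2 / 8"
    by (simp add: sum.distrib sum_distrib_left sum_divide_distrib[symmetric] distrib_left add_divide_distrib)
  also have "(\<Sum>k<m. f (2 * k) + f (2 * k + 1)) = (\<Sum>x<2 * m. f x)"
    by (induction m) (simp_all add: add.commute)
  finally show ?thesis .
qed

lemma sum_exp_permuted_coin_subsets_le:
  fixes f :: "nat \<Rightarrow> real"
  assumes width: "\<And>x x'. x < 2 * m \<Longrightarrow> x' < 2 * m \<Longrightarrow> \<bar>f x - f x'\<bar> \<le> w"
    and \<sigma>: "\<sigma> permutes {..<2 * m}"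
  shows "(\<Sum>b\<in>PiE {..<m} (\<lambda>_. UNIV). exp (l * (\<Sum>x\<in>\<sigma> ` coin_subset m b. f x)))
           \<le> 2 ^ m * exp (l * (\<Sum>x<2 * m. f x) / 2 + m * l^2 * w^2 / 8)"
proof -
  have "exp (l * (\<Sum>x\<in>\<sigma> ` H. f x)) = (\<Prod>x\<in>H. exp (l * f (\<sigma> x)))" if "finite H" for H
    using that permutes_inj[OF \<sigma>] by (simp add: sum.reindex inj_on_subset exp_sum sum_distrib_left)
  then have "(\<Sum>b\<in>PiE {..<m} (\<lambda>_. UNIV). exp (l * (\<Sum>x\<in>\<sigma> ` coin_subset m b. f x)))
               = (\<Sum>b\<in>PiE {..<m} (\<lambda>_. UNIV). \<Prod>x\<in>coin_subset m b. exp (l * f (\<sigma> x)))"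
    by (intro sum.cong) (simp_all add: coin_subset_def)
  also have "\<dots> = (\<Prod>k<m. exp (l * f (\<sigma> (2 * k))) + exp (l * f (\<sigma> (2 * k + 1))))"
    by (rule sum_prod_coin_subset)
  also have "\<dots> \<le> 2 ^ m * exp (l * (\<Sum>x<2 * m. f (\<sigma> x)) / 2 + m * l^2 * w^2 / 8)"
    using permutes_in_image[OF \<sigma>] by (intro prod_pairs_exp_le width) auto
  also have "(\<Sum>x<2 * m. f (\<sigma> x)) = (\<Sum>x<2 * m. f x)"
    using sum.permute[OF \<sigma>, of f] by (simp add: comp_def)
  finally show ?thesis .
qed

lemma sum_exp_ksubsets_le:
  fixes f :: "nat \<Rightarrow> real"
  assumes width: "\<And>x x'. x < 2 * m \<Longrightarrow> x' < 2 * m \<Longrightarrow> \<bar>f x - f x'\<bar> \<le> w"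
  shows "(\<Sum>H\<in>ksubsets {..<2 * m} m. exp (l * (\<Sum>x\<in>H. f x)))
           \<le> card (ksubsets {..<2 * m} m) * exp (l * (\<Sum>x<2 * m. f x) / 2 + m * l^2 * w^2 / 8)"
proof -
  define K where "K = ksubsets {..<2 * m} m"
  define P where "P = {\<sigma>. \<sigma> permutes {..<2 * m}}"
  define C where "C = PiE {..<m} (\<lambda>_. UNIV :: bool set)"
  define F where "F H = exp (l * (\<Sum>x\<in>H. f x))" for H
  define E where "E = exp (l * (\<Sum>x<2 * m. f x) / 2 + m * l^2 * w^2 / 8)"
  have "card P > 0"
    unfolding P_def using finite_permutations[of "{..<2 * m}"]
    by (simp add: card_gt_0_iff) (blast intro: permutes_id)
  have avg: "card P * (\<Sum>H\<in>K. F H) = card K * (\<Sum>\<sigma>\<in>P. F (\<sigma> ` coin_subset m b))" for b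
    unfolding P_def K_def by (rule sum_ksubsets_eq_sum_permutes[OF finite_lessThan coin_subset_in_ksubsets])
  have "card C * (card P * (\<Sum>H\<in>K. F H)) = (\<Sum>b\<in>C. card K * (\<Sum>\<sigma>\<in>P. F (\<sigma> ` coin_subset m b)))"
    by (simp add: avg[symmetric])
  also have "\<dots> = card K * (\<Sum>\<sigma>\<in>P. \<Sum>b\<in>C. F (\<sigma> ` coin_subset m b))"
    unfolding sum_distrib_left by (rule sum.swap)
  also have "\<dots> \<le> card K * (\<Sum>\<sigma>\<in>P. 2 ^ m * E)"
    unfolding P_def C_def F_def E_def using sum_exp_permuted_coin_subsets_le[OF width]
    by (intro mult_left_mono sum_mono) auto
  also have "\<dots> = card C * (card P * (card K * E))"
    by (simp add: C_def card_PiE)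
  finally have "card P * (\<Sum>H\<in>K. F H) \<le> card P * (card K * E)"
    by (rule mult_left_le_imp_le) (simp add: C_def card_PiE)
  then show ?thesis
    using \<open>card P > 0\<close> by (simp add: K_def F_def E_def)
qed

lemma prob_ksubsets:
  assumes "k \<le> n"
  shows "measure_pmf.prob (pmf_of_set (ksubsets {..<n} k)) A
           = card (ksubsets {..<n} k \<inter> A) / card (ksubsets {..<n} k)"
  using lessThan_in_ksubsets[OF assms] by (intro measure_pmf_of_set) (auto simp: finite_ksubsets)

lemma set_pmf_ksubsets: "k \<le> n \<Longrightarrow> set_pmf (pmf_of_set (ksubsets {..<n} k)) = ksubsets {..<n} k"
  using lessThan_in_ksubsets by (intro set_pmf_of_set) (auto simp: finite_ksubsets)

lemma prob_half_sample_upper_tail: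
  fixes f :: "nat \<Rightarrow> real"
  assumes width: "\<And>x x'. x < 2 * m \<Longrightarrow> x' < 2 * m \<Longrightarrow> \<bar>f x - f x'\<bar> \<le> w"
    and "w > 0" "m > 0" "s \<ge> 0"
  shows "measure_pmf.prob (pmf_of_set (ksubsets {..<2 * m} m))
           {H. s \<le> (\<Sum>x\<in>H. f x) - (\<Sum>x<2 * m. f x) / 2} \<le> exp (- 2 * s^2 / (m * w^2))"
proof -
  define K where "K = ksubsets {..<2 * m} m"
  define S where "S = (\<Sum>x<2 * m. f x)"
  define A where "A = {H. s \<le> (\<Sum>x\<in>H. f x) - S / 2}"
  \<comment> \<open>the Chernoff parameter minimising the bound\<close>
  define l where "l = 4 * s / (m * w^2)"
  have "l \<ge> 0"
    using assms(2-4) by (simp add: l_def)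
  have "card K > 0"
    unfolding K_def using lessThan_in_ksubsets[of m "2 * m"] finite_ksubsets[of "{..<2 * m}" m]
    by (auto simp: card_gt_0_iff)
  have "real (card (K \<inter> A)) = (\<Sum>H\<in>K \<inter> A. 1)"
    by simp
  also have "\<dots> \<le> (\<Sum>H\<in>K \<inter> A. exp (l * (\<Sum>x\<in>H. f x)) * exp (- l * S / 2 - l * s))"
  proof (rule sum_mono)
    fix H assume "H \<in> K \<inter> A"
    then have "0 \<le> l * ((\<Sum>x\<in>H. f x) - S / 2 - s)"
      using \<open>l \<ge> 0\<close> by (simp add: A_def)
    then show "1 \<le> exp (l * (\<Sum>x\<in>H. f x)) * exp (- l * S / 2 - l * s)"
      by (simp add: exp_add[symmetric] algebra_simps)
  qed
  also have "\<dots> \<le> (\<Sum>H\<in>K. exp (l * (\<Sum>x\<in>H. f x))) * exp (- l * S / 2 - l * s)"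
    unfolding sum_distrib_right by (rule sum_mono2) (auto simp: K_def finite_ksubsets)
  also have "\<dots> \<le> card K * exp (l * S / 2 + m * l^2 * w^2 / 8) * exp (- l * S / 2 - l * s)"
    unfolding K_def S_def by (intro mult_right_mono sum_exp_ksubsets_le width) auto
  also have "\<dots> = card K * exp (- 2 * s^2 / (m * w^2))"
    using assms(2,3) by (simp add: mult.assoc exp_add[symmetric] l_def field_simps power2_eq_square)
  finally have "card (K \<inter> A) / card K \<le> exp (- 2 * s^2 / (m * w^2))"
    using \<open>card K > 0\<close> by (subst pos_divide_le_eq) (simp_all add: mult.commute)
  then show ?thesis
    using prob_ksubsets[of m "2 * m" A] by (simp add: K_def A_def S_def)
qed

lemma prob_half_sample_deviation_le:
  fixes f :: "nat \<Rightarrow> real"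
  assumes width: "\<And>x x'. x < 2 * m \<Longrightarrow> x' < 2 * m \<Longrightarrow> \<bar>f x - f x'\<bar> \<le> w"
    and "w > 0" "m > 0" "s \<ge> 0"
  shows "measure_pmf.prob (pmf_of_set (ksubsets {..<2 * m} m))
           {H. s \<le> \<bar>(\<Sum>x\<in>H. f x) - (\<Sum>x<2 * m. f x) / 2\<bar>} \<le> 2 * exp (- 2 * s^2 / (m * w^2))"
proof -
  let ?P = "measure_pmf.prob (pmf_of_set (ksubsets {..<2 * m} m))"
  have width': "\<bar>- f x - - f x'\<bar> \<le> w" if "x < 2 * m" "x' < 2 * m" for x x'
    using width[OF that(2,1)] by simp
  have "?P {H. s \<le> \<bar>(\<Sum>x\<in>H. f x) - (\<Sum>x<2 * m. f x) / 2\<bar>}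
          \<le> ?P ({H. s \<le> (\<Sum>x\<in>H. f x) - (\<Sum>x<2 * m. f x) / 2}
                \<union> {H. s \<le> (\<Sum>x\<in>H. - f x) - (\<Sum>x<2 * m. - f x) / 2})"
    by (rule measure_pmf.finite_measure_mono) (auto simp: sum_negf abs_if)
  also have "\<dots> \<le> ?P {H. s \<le> (\<Sum>x\<in>H. f x) - (\<Sum>x<2 * m. f x) / 2}
                  + ?P {H. s \<le> (\<Sum>x\<in>H. - f x) - (\<Sum>x<2 * m. - f x) / 2}"
    by (rule measure_Un_le) auto
  also have "\<dots> \<le> 2 * exp (- 2 * s^2 / (m * w^2))"
    using prob_half_sample_upper_tail[where f = f, OF width assms(2-4)]
      prob_half_sample_upper_tail[where f = "\<lambda>x. - f x", OF width' assms(2-4)]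
    by simp
  finally show ?thesis .
qed

lemma exp_minus_exp_neg_le:
  fixes \<epsilon> :: real
  assumes "\<epsilon> \<ge> 0"
  shows "exp \<epsilon> - exp (- \<epsilon>) \<le> exp (2 * \<epsilon>) - 1"
proof -
  have "exp \<epsilon> - exp (- \<epsilon>) = exp (- \<epsilon>) * (exp (2 * \<epsilon>) - 1)"
    by (simp add: right_diff_distrib exp_add[symmetric])
  also have "\<dots> \<le> exp (2 * \<epsilon>) - 1"
    using assms by (intro mult_left_le_one_le) auto
  finally show ?thesis .
qed

lemma eps_private_pmf_dist_le:
  assumes "eps_private \<epsilon> d R" "\<epsilon> \<ge> 0" "x < d" "x' < d"
  shows "\<bar>pmf (R x) y - pmf (R x') y\<bar> \<le> (exp (2 * \<epsilon>) - 1) * (\<Sum>z<d. pmf (R z) y) / d"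
proof -
  have ratio: "pmf (R u) y \<le> exp \<epsilon> * pmf (R u') y" if "u < d" "u' < d" for u u'
    using assms(1) that by (auto simp: eps_private_def measure_pmf_single[symmetric])
  have diff: "pmf (R u) y - pmf (R u') y \<le> (exp (2 * \<epsilon>) - 1) * (\<Sum>z<d. pmf (R z) y) / d"
    if "u < d" "u' < d" for u u'
  proof -
    have "pmf (R u) y - pmf (R u') y \<le> (exp (2 * \<epsilon>) - 1) * pmf (R z) y" if "z < d" for z
    proof -
      have "exp (- \<epsilon>) * pmf (R z) y \<le> exp (- \<epsilon>) * (exp \<epsilon> * pmf (R u') y)"
        using ratio[OF that \<open>u' < d\<close>] by simp
      then have "exp (- \<epsilon>) * pmf (R z) y \<le> pmf (R u') y"
        by (simp add: mult.assoc[symmetric] exp_add[symmetric])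
      then have "pmf (R u) y - pmf (R u') y \<le> (exp \<epsilon> - exp (- \<epsilon>)) * pmf (R z) y"
        using ratio[OF \<open>u < d\<close> that] unfolding left_diff_distrib by linarith
      also have "\<dots> \<le> (exp (2 * \<epsilon>) - 1) * pmf (R z) y"
        using exp_minus_exp_neg_le[OF assms(2)] by (simp add: mult_right_mono)
      finally show ?thesis .
    qed
    then have "(\<Sum>z<d. pmf (R u) y - pmf (R u') y) \<le> (\<Sum>z<d. (exp (2 * \<epsilon>) - 1) * pmf (R z) y)"
      by (intro sum_mono) simp
    then have "d * (pmf (R u) y - pmf (R u') y) \<le> (exp (2 * \<epsilon>) - 1) * (\<Sum>z<d. pmf (R z) y)"
      by (simp add: sum_distrib_left)
    then show ?thesis
      using \<open>u < d\<close> by (simp add: pos_le_divide_eq mult.commute)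
  qed
  show ?thesis
    using diff[OF assms(3,4)] diff[OF assms(4,3)] by (simp add: abs_le_iff)
qed

lemma abs_ln_le:
  fixes x :: real
  assumes "\<bar>x - 1\<bar> \<le> 1/2"
  shows "\<bar>ln x\<bar> \<le> 2 * \<bar>x - 1\<bar>"
proof -
  have "\<bar>ln x - (x - 1)\<bar> \<le> 2 * (x - 1)^2"
    using abs_ln_one_plus_x_minus_x_bound[of "x - 1"] assms by simp
  also have "2 * (x - 1)^2 = 2 * \<bar>x - 1\<bar> * \<bar>x - 1\<bar>"
    by (simp add: power2_eq_square abs_mult_self_eq)
  also have "\<dots> \<le> \<bar>x - 1\<bar>"
    using assms mult_right_mono[of "2 * \<bar>x - 1\<bar>" 1 "\<bar>x - 1\<bar>"] by simp
  finally have "\<bar>ln x - (x - 1)\<bar> \<le> \<bar>x - 1\<bar>" .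
  then show ?thesis
    using abs_triangle_ineq[of "ln x - (x - 1)" "x - 1"] by simp
qed

lemma out_prob_eq:
  assumes "finite H" "H \<noteq> {}"
  shows "out_prob R H y = (\<Sum>x\<in>H. pmf (R x) y) / card H"
  unfolding out_prob_def measure_pmf_single by (rule pmf_bind_pmf_of_set[OF assms(2,1)])

lemma leaky_imp_deviation:
  assumes leak: "leaky v (2 * m) H R y" and H: "H \<in> ksubsets {..<2 * m} m" and "m > 0" "v \<le> 1"
  shows "v * (\<Sum>x<2 * m. pmf (R x) y) / 4 \<le> \<bar>(\<Sum>x\<in>H. pmf (R x) y) - (\<Sum>x<2 * m. pmf (R x) y) / 2\<bar>"
proof (rule ccontr)
  define S where "S = (\<Sum>x<2 * m. pmf (R x) y)"
  define X where "X = (\<Sum>x\<in>H. pmf (R x) y)"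
  assume "\<not> ?thesis"
  then have dev: "\<bar>2 * X - S\<bar> < v * S / 2"
    by (simp add: S_def X_def abs_if split: if_splits)
  have "finite H" "H \<noteq> {}" "card H = m"
    using H \<open>m > 0\<close> finite_subset[of H "{..<2 * m}"] by (auto simp: ksubsets_def)
  then have out_H: "out_prob R H y = X / m"
    by (simp add: out_prob_eq X_def)
  have out_all: "out_prob R {..<2 * m} y = S / (2 * m)"
    using \<open>m > 0\<close> by (simp add: out_prob_eq S_def lessThan_empty_iff)
  have "S > 0"
    using leak \<open>m > 0\<close> by (simp add: leaky_def out_all zero_less_divide_iff)
  define r where "r = 2 * X / S"
  have ratio: "out_prob R H y / out_prob R {..<2 * m} y = r"
    unfolding out_H out_all r_def using \<open>m > 0\<close> by (simp add: field_simps)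
  have "r - 1 = (2 * X - S) / S"
    using \<open>S > 0\<close> by (simp add: r_def field_simps)
  then have "\<bar>r - 1\<bar> = \<bar>2 * X - S\<bar> / S"
    using \<open>S > 0\<close> by (simp add: abs_divide)
  also have "\<dots> < v / 2"
    using dev \<open>S > 0\<close> by (simp add: divide_less_eq)
  finally have close: "\<bar>r - 1\<bar> < v / 2" .
  then have "\<bar>ln r\<bar> < v"
    using abs_ln_le[of r] \<open>v \<le> 1\<close> by simp
  moreover have "out_prob R H y \<noteq> 0"
    using close \<open>v \<le> 1\<close> \<open>S > 0\<close> \<open>m > 0\<close>
    by (auto simp: out_H r_def zero_less_divide_iff)
  ultimately show False
    using leak by (simp add: leaky_def ratio)
qed

lemma prob_leaky_le_prob_deviation:
  assumes "m > 0" "v \<le> 1"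
  shows "measure_pmf.prob (pmf_of_set (ksubsets {..<2 * m} m)) {H. leaky v (2 * m) H R y}
           \<le> measure_pmf.prob (pmf_of_set (ksubsets {..<2 * m} m))
                {H. v * (\<Sum>x<2 * m. pmf (R x) y) / 4
                      \<le> \<bar>(\<Sum>x\<in>H. pmf (R x) y) - (\<Sum>x<2 * m. pmf (R x) y) / 2\<bar>}"
  unfolding prob_ksubsets[OF le_add2[of m m, folded mult_2]]
  using leaky_imp_deviation assms
  by (intro divide_right_mono of_nat_mono card_mono) (auto simp: finite_ksubsets)

lemma leak_threshold_le_one:
  fixes c L :: real
  assumes "c \<ge> 0" "L \<ge> 0" "real d > 4 * c^2 * L"
  shows "c * sqrt (4 / d * L) \<le> 1"
proof -
  have "0 \<le> 4 * c^2 * L"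
    using assms(2) by simp
  with assms(3) have "real d > 0"
    by linarith
  then have "(c * sqrt (4 / d * L))^2 < 1"
    using assms(2,3) by (simp add: power_mult_distrib field_simps)
  then show ?thesis
    using assms(1,2) by (simp add: power_less_one_iff abs_square_less_1)
qed

lemma prob_leaky_le:
  fixes R :: "nat \<Rightarrow> 'y pmf"
  assumes "\<epsilon> > 0" "even d" "eps_private \<epsilon> d R" "L \<ge> 0"
    and "real d > 4 * (exp (2 * \<epsilon>) - 1)^2 * L"
  shows "measure_pmf.prob (pmf_of_set (ksubsets {..<d} (d div 2)))
           {H. leaky ((exp (2 * \<epsilon>) - 1) * sqrt (4 / d * L)) d H R y} \<le> 2 * exp (- L)"
proof -
  obtain m where d: "d = 2 * m"
    using assms(2) by (elim evenE)
  define c where "c = exp (2 * \<epsilon>) - 1"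
  define v where "v = c * sqrt (4 / d * L)"
  define S where "S = (\<Sum>x<d. pmf (R x) y)"
  let ?K = "ksubsets {..<2 * m} m"
  have "c > 0"
    using assms(1) by (simp add: c_def)
  have "0 \<le> 4 * c^2 * L"
    using assms(4) by simp
  then have "m > 0"
    using assms(5) d by (simp add: c_def)
  have "v \<ge> 0" "v \<le> 1"
    using \<open>c > 0\<close> assms(4,5) leak_threshold_le_one[of c L d] by (simp_all add: v_def c_def)
  have v2: "v^2 = c^2 * (4 / d * L)"
    using assms(4) by (simp add: v_def power_mult_distrib)
  show ?thesis
  proof (cases "S = 0")
    case True
    then have "?K \<inter> {H. leaky v d H R y} = {}"
      using \<open>m > 0\<close> by (auto simp: leaky_def out_prob_eq d S_def lessThan_empty_iff)
    then show ?thesis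
      using prob_ksubsets[of m "2 * m"] by (simp add: d v_def c_def)
  next
    case False
    then have "S > 0"
      using sum_nonneg[of "{..<d}" "\<lambda>x. pmf (R x) y"] by (simp add: S_def)
    have "measure_pmf.prob (pmf_of_set ?K) {H. leaky v d H R y}
            \<le> measure_pmf.prob (pmf_of_set ?K)
                 {H. v * S / 4 \<le> \<bar>(\<Sum>x\<in>H. pmf (R x) y) - (\<Sum>x<2 * m. pmf (R x) y) / 2\<bar>}"
      using prob_leaky_le_prob_deviation[OF \<open>m > 0\<close> \<open>v \<le> 1\<close>] by (simp add: S_def d)
    also have "\<dots> \<le> 2 * exp (- 2 * (v * S / 4)^2 / (m * (c * S / d)^2))"
      using \<open>c > 0\<close> \<open>S > 0\<close> \<open>m > 0\<close> \<open>v \<ge> 0\<close> eps_private_pmf_dist_le[OF assms(3)] assms(1)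
      by (intro prob_half_sample_deviation_le) (auto simp: c_def S_def d)
    also have "- 2 * (v * S / 4)^2 / (m * (c * S / d)^2) = - (v^2 * m / (2 * c^2))"
      using \<open>c > 0\<close> \<open>S > 0\<close> \<open>m > 0\<close>
      by (simp add: power_mult_distrib power_divide d field_simps power2_eq_square[of "real m"])
    also have "v^2 * m / (2 * c^2) = L"
      using \<open>c > 0\<close> \<open>m > 0\<close> by (simp add: v2 d field_simps)
    finally show ?thesis
      by (simp add: d v_def c_def)
  qed
qed

lemma eps_private_restrict: "eps_private \<epsilon> d (restrict R {..<d}) \<longleftrightarrow> eps_private \<epsilon> d R"
  by (simp add: eps_private_def)

lemma out_prob_restrict:
  assumes "H \<subseteq> A" "finite H" "H \<noteq> {}"
  shows "out_prob (restrict R A) H y = out_prob R H y"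
  using assms by (auto simp: out_prob_eq intro!: sum.cong)

lemma leaky_restrict:
  assumes "H \<subseteq> {..<d}" "H \<noteq> {}"
  shows "leaky v d H (restrict R {..<d}) y \<longleftrightarrow> leaky v d H R y"
proof -
  have "{..<d} \<noteq> {}"
    using assms by auto
  then show ?thesis
    using assms finite_subset[OF assms(1)] by (simp add: leaky_def out_prob_restrict)
qed

lemma one_minus_prob_le:
  assumes "set_pmf p - B \<subseteq> A"
  shows "1 - measure_pmf.prob p B \<le> measure_pmf.prob p A"
proof -
  have "1 - measure_pmf.prob p B = measure_pmf.prob p (- B \<inter> set_pmf p)"
    by (simp add: measure_Int_set_pmf measure_pmf.prob_compl[symmetric] Compl_eq_Diff_UNIV)
  also have "\<dots> \<le> measure_pmf.prob p A"
    using assms by (intro measure_pmf.finite_measure_mono) auto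
  finally show ?thesis .
qed

lemma prob_not_leaky_ge:
  fixes R :: "nat \<Rightarrow> nat \<Rightarrow> 'y pmf"
  assumes "0 < k" "k \<le> d"
  shows "1 - measure_pmf.prob (pmf_of_set (ksubsets {..<d} k))
               {H. \<exists>y. \<exists>r\<in>(\<lambda>i. restrict (R i) {..<d}) ` {..<n}. leaky v d H r y}
         \<le> measure_pmf.prob (pmf_of_set (ksubsets {..<d} k)) {H. \<forall>y. \<forall>i<n. \<not> leaky v d H (R i) y}"
proof (rule one_minus_prob_le, rule subsetI)
  fix H
  assume "H \<in> set_pmf (pmf_of_set (ksubsets {..<d} k))
            - {H. \<exists>y. \<exists>r\<in>(\<lambda>i. restrict (R i) {..<d}) ` {..<n}. leaky v d H r y}"
  then have H: "H \<in> ksubsets {..<d} k"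
    and good: "\<forall>y. \<forall>i<n. \<not> leaky v d H (restrict (R i) {..<d}) y"
    using assms by (auto simp: set_pmf_ksubsets)
  then have "H \<subseteq> {..<d}" "H \<noteq> {}"
    using assms(1) by (auto simp: ksubsets_def)
  with good show "H \<in> {H. \<forall>y. \<forall>i<n. \<not> leaky v d H (R i) y}"
    by (simp add: leaky_restrict)
qed

lemma prob_leaky_union_le:
  fixes Rs :: "(nat \<Rightarrow> 'y::finite pmf) set"
  assumes "\<epsilon> > 0" "even d" "finite Rs" "\<And>r. r \<in> Rs \<Longrightarrow> eps_private \<epsilon> d r" "L \<ge> 0"
    and "real d > 4 * (exp (2 * \<epsilon>) - 1)^2 * L"
  shows "measure_pmf.prob (pmf_of_set (ksubsets {..<d} (d div 2)))
           {H. \<exists>y. \<exists>r\<in>Rs. leaky ((exp (2 * \<epsilon>) - 1) * sqrt (4 / d * L)) d H r y}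
         \<le> 2 * CARD('y) * card Rs * exp (- L)"
proof -
  let ?P = "measure_pmf.prob (pmf_of_set (ksubsets {..<d} (d div 2)))"
  let ?v = "(exp (2 * \<epsilon>) - 1) * sqrt (4 / d * L)"
  have "{H. \<exists>y. \<exists>r\<in>Rs. leaky ?v d H r y} = (\<Union>p\<in>UNIV \<times> Rs. {H. leaky ?v d H (snd p) (fst p)})"
    by force
  also have "?P \<dots> \<le> (\<Sum>p\<in>UNIV \<times> Rs. ?P {H. leaky ?v d H (snd p) (fst p)})"
    by (rule measure_pmf.finite_measure_subadditive_finite) (use assms(3) in auto)
  also have "\<dots> \<le> (\<Sum>p\<in>(UNIV :: 'y set) \<times> Rs. 2 * exp (- L))"
  proof (rule sum_mono)
    fix p :: "'y \<times> (nat \<Rightarrow> 'y pmf)"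
    assume "p \<in> UNIV \<times> Rs"
    then show "?P {H. leaky ?v d H (snd p) (fst p)} \<le> 2 * exp (- L)"
      using assms by (intro prob_leaky_le) auto
  qed
  also have "\<dots> = 2 * CARD('y) * card Rs * exp (- L)"
    by (simp add: card_cartesian_product)
  finally show ?thesis .
qed

theorem mainTheorem5:
  fixes \<epsilon> :: real and d n :: nat and R :: "nat \<Rightarrow> nat \<Rightarrow> 'y::finite pmf"
  assumes "\<epsilon> > 0"
    and "even d"
    and "\<And>i. i < n \<Longrightarrow> eps_private \<epsilon> d (R i)"
    and "real d > 4 * (exp (2 * \<epsilon>) - 1)^2 *
           ln (12 * real CARD('y) * real (card ((\<lambda>i. restrict (R i) {..<d}) ` {..<n})))"
  shows "measure_pmf.prob (pmf_of_set {H. H \<subseteq> {..<d} \<and> card H = d div 2})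
           {H. \<forall>y. \<forall>i<n. \<not> leaky
                ((exp (2 * \<epsilon>) - 1) * sqrt (4 / real d *
                   ln (12 * real CARD('y) * real (card ((\<lambda>i. restrict (R i) {..<d}) ` {..<n})))))
                d H (R i) y}
         \<ge> 5 / 6"
proof (cases "n = 0")
  case False
  define Rs where "Rs = (\<lambda>i. restrict (R i) {..<d}) ` {..<n}"
  define L where "L = ln (12 * real CARD('y) * real (card Rs))"
  define v where "v = (exp (2 * \<epsilon>) - 1) * sqrt (4 / real d * L)"
  let ?P = "measure_pmf.prob (pmf_of_set (ksubsets {..<d} (d div 2)))"
  have "finite Rs" "card Rs > 0"
    using False by (auto simp: Rs_def card_gt_0_iff)
  then have "1 * 1 \<le> real CARD('y) * real (card Rs)"
    by (intro mult_mono) auto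
  then have "L \<ge> 0" and union_bound: "2 * CARD('y) * card Rs * exp (- L) = 1 / 6"
    using \<open>card Rs > 0\<close> by (simp_all add: L_def exp_minus field_simps)
  have hyp: "real d > 4 * (exp (2 * \<epsilon>) - 1)^2 * L"
    using assms(4) by (simp add: L_def Rs_def)
  have "\<And>r. r \<in> Rs \<Longrightarrow> eps_private \<epsilon> d r"
    using assms(3) by (auto simp: Rs_def eps_private_restrict)
  then have bad: "?P {H. \<exists>y. \<exists>r\<in>Rs. leaky v d H r y} \<le> 2 * CARD('y) * card Rs * exp (- L)"
    unfolding v_def by (rule prob_leaky_union_le[OF assms(1,2) \<open>finite Rs\<close> _ \<open>L \<ge> 0\<close> hyp])
  have "0 \<le> 4 * (exp (2 * \<epsilon>) - 1)^2 * L"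
    using \<open>L \<ge> 0\<close> by simp
  with hyp assms(2) have "0 < d div 2"
    by (auto elim!: evenE)
  then have "1 - ?P {H. \<exists>y. \<exists>r\<in>Rs. leaky v d H r y} \<le> ?P {H. \<forall>y. \<forall>i<n. \<not> leaky v d H (R i) y}"
    unfolding Rs_def by (rule prob_not_leaky_ge) simp
  with bad union_bound show ?thesis
    unfolding Rs_def[symmetric] L_def[symmetric] v_def[symmetric] ksubsets_def[symmetric] by linarith
qed simp

end
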